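(* Let $\mathcal{G}=(\mathcal{V},\mathcal{E})$ be a directed graph with $n$ nodes, $m$ edges and terminals $s,t$, let $f:2^{\mathcal{E}}\to\mathbb{R}_+$ be normalized, monotone nondecreasing and submodular with Lovász extension $\tilde f$, and let $C^*$ be an $(s,t)$-cut minimizing $f$. Let $(x^*,y^* )$ be an optimal solution of the relaxation $$\min_{y\in\mathbb{R}^{\mathcal{E}},x\in\mathbb{R}^{\mathcal{V}}}\tilde f(y)\ \text{ s.t. } -x(u)+x(v)+y(e)\ge 0\ \forall e=(u,v)\in\mathcal{E},\ x(s)-x(t)\ge1,\ y\ge0,$$ with $x^*\in[0,1]^n$, $y^*\in[0,1]^m$. For $\theta$ drawn uniformly at random from $[0,1]$, let $\mathcal{V}_\theta=\{u\in\mathcal{V}: x^*(u)\ge\theta\}$ and let $C_\theta$ be the cut consisting of the edges leaving $\mathcal{V}_\theta$. Then $\mathbb{E}_\theta[f(C_\theta)]\le (n-1)\tilde f(y^* )\le (n-1)f(C^* )$.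
   Context: An $(s,t)$-cut is a set of edges whose removal disconnects all $s$-$t$ paths. The Lovász extension: for $x\in[0,1]^m$ written uniquely as $x=\sum_j\lambda_j\chi_{B_j}$ with $\lambda_j>0$ and nested level sets $B_1\subset B_2\subset\cdots$, $\tilde f(x)=\sum_j\lambda_j f(B_j)$, where $\chi_B$ is the indicator vector of $B$. *)

theory Defs
  imports "HOL-Analysis.Analysis"
begin

definition st_cut :: "('v \<times> 'v) set \<Rightarrow> 'v \<Rightarrow> 'v \<Rightarrow> ('v \<times> 'v) set \<Rightarrow> bool" where
  "st_cut E s t C \<longleftrightarrow> C \<subseteq> E \<and> (s, t) \<notin> (E - C)\<^sup>*"

definition normalized_fn :: "('e set \<Rightarrow> real) \<Rightarrow> bool" where
  "normalized_fn f \<longleftrightarrow> f {} = 0"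

definition monotone_fn :: "'e set \<Rightarrow> ('e set \<Rightarrow> real) \<Rightarrow> bool" where
  "monotone_fn E f \<longleftrightarrow> (\<forall>A B. A \<subseteq> B \<and> B \<subseteq> E \<longrightarrow> f A \<le> f B)"

definition submodular_fn :: "'e set \<Rightarrow> ('e set \<Rightarrow> real) \<Rightarrow> bool" where
  "submodular_fn E f \<longleftrightarrow>
     (\<forall>A B. A \<subseteq> E \<and> B \<subseteq> E \<longrightarrow> f (A \<union> B) + f (A \<inter> B) \<le> f A + f B)"

text \<open>Lovasz extension on nonnegative vectors y indexed by the ground set E:
  with the distinct positive values v_1 > ... > v_k of y on E, level sets
  B_j = {e. y e \<ge> v_j} (nested increasing) and coefficients
  lambda_j = v_j - v_(j+1) (v_(k+1) = 0), it equals the sum of lambda_j * f B_j,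
  i.e. y = sum lambda_j chi(B_j).\<close>

definition next_lower :: "'e set \<Rightarrow> ('e \<Rightarrow> real) \<Rightarrow> real \<Rightarrow> real" where
  "next_lower E y v = Max (insert 0 {w \<in> y ` E. w < v})"

definition lovasz_ext :: "'e set \<Rightarrow> ('e set \<Rightarrow> real) \<Rightarrow> ('e \<Rightarrow> real) \<Rightarrow> real" where
  "lovasz_ext E f y =
     (\<Sum>v \<in> {w \<in> y ` E. w > 0}. (v - next_lower E y v) * f {e \<in> E. y e \<ge> v})"

definition relax_feasible ::
  "'v set \<Rightarrow> ('v \<times> 'v) set \<Rightarrow> 'v \<Rightarrow> 'v \<Rightarrow> ('v \<Rightarrow> real) \<Rightarrow> (('v \<times> 'v) \<Rightarrow> real) \<Rightarrow> bool" where
  "relax_feasible V E s t x y \<longleftrightarrow>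
     (\<forall>u v. (u, v) \<in> E \<longrightarrow> - x u + x v + y (u, v) \<ge> 0) \<and>
     x s - x t \<ge> 1 \<and>
     (\<forall>e \<in> E. y e \<ge> 0)"

definition level_set :: "'v set \<Rightarrow> ('v \<Rightarrow> real) \<Rightarrow> real \<Rightarrow> 'v set" where
  "level_set V x \<theta> = {u \<in> V. x u \<ge> \<theta>}"

definition threshold_cut ::
  "'v set \<Rightarrow> ('v \<times> 'v) set \<Rightarrow> ('v \<Rightarrow> real) \<Rightarrow> real \<Rightarrow> ('v \<times> 'v) set" where
  "threshold_cut V E x \<theta> =
     {(u, v) \<in> E. u \<in> level_set V x \<theta> \<and> v \<notin> level_set V x \<theta>}"

end

theory Submission
  imports Defs "HOL-Probability.Probability_Measure"
begin

text \<open>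
  Write \<open>L\<close> for the Lovasz extension at \<open>y\<^sup>*\<close>. Each threshold cut is constant on the
  interval \<open>(p, w]\<close> between consecutive values \<open>p < w\<close> of \<open>x\<^sup>*\<close>, and every edge it cuts
  has \<open>y\<^sup>* \<ge> w - p\<close> by the edge constraint. Monotonicity of \<open>f\<close> and the layer-cake form of
  \<open>L\<close> give \<open>(w - p) f(C\<^sub>w) \<le> L\<close>, so each of the at most \<open>n - 1\<close> positive values of
  \<open>x\<^sup>*\<close> contributes at most \<open>L\<close> to the expectation. For the second inequality the
  indicator vectors of any \<open>(s,t)\<close>-cut \<open>C\<close> are feasible, with objective value \<open>f(C)\<close>.
\<close>

lemma sum_gaps_to_next_lower_eq_Max:
  fixes S :: "real set"
  assumes "finite S" "\<forall>v\<in>S. 0 < v"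
  shows "(\<Sum>v\<in>S. v - Max (insert 0 {w\<in>S. w < v})) = Max (insert 0 S)"
  using assms
proof (induct S rule: finite_linorder_max_induct)
  case empty
  then show ?case by simp
next
  case (insert b A)
  have "b \<notin> A" using insert by auto
  have below_b: "{w\<in>insert b A. w < b} = A" using insert by auto
  have below_A: "\<And>v. v \<in> A \<Longrightarrow> {w\<in>insert b A. w < v} = {w\<in>A. w < v}" using insert by auto
  have "(\<Sum>v\<in>insert b A. v - Max (insert 0 {w\<in>insert b A. w < v}))
     = (b - Max (insert 0 A)) + (\<Sum>v\<in>A. v - Max (insert 0 {w\<in>A. w < v}))"
    using insert \<open>b \<notin> A\<close> below_b below_A by simp
  also have "\<dots> = b" using insert by simp
  also have "b = Max (insert 0 (insert b A))"
    using insert by (intro Max_eqI[symmetric]) auto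
  finally show ?case .
qed

lemma next_lower_nonneg: "finite E \<Longrightarrow> 0 \<le> next_lower E y v"
  unfolding next_lower_def by (intro Max_ge) auto

lemma next_lower_less: "finite E \<Longrightarrow> 0 < v \<Longrightarrow> next_lower E y v < v"
  unfolding next_lower_def by (subst Max_less_iff) auto

lemma le_next_lower: "finite E \<Longrightarrow> e \<in> E \<Longrightarrow> y e < v \<Longrightarrow> y e \<le> next_lower E y v"
  unfolding next_lower_def by (intro Max_ge) auto

lemma sum_gaps_to_next_lower:
  assumes finE: "finite E" and ynn: "\<forall>e\<in>E. 0 \<le> y e" and m: "m \<in> y ` E" "0 < m"
  shows "(\<Sum>v\<in>{w\<in>y ` E. 0 < w \<and> w \<le> m}. v - next_lower E y v) = m"
proof -
  define W where "W = {w\<in>y ` E. 0 < w \<and> w \<le> m}"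
  have finW: "finite W" using finE unfolding W_def by simp
  have "next_lower E y v = Max (insert 0 {w\<in>W. w < v})" if "v \<in> W" for v
  proof -
    have "insert 0 {w \<in> y ` E. w < v} = insert 0 {w\<in>W. w < v}"
      using that ynn unfolding W_def by force
    then show ?thesis unfolding next_lower_def by simp
  qed
  moreover have "Max (insert 0 W) = m"
    using m finW unfolding W_def by (intro Max_eqI) auto
  ultimately show ?thesis
    using sum_gaps_to_next_lower_eq_Max[OF finW] unfolding W_def by simp
qed

lemma lovasz_ext_nonneg:
  assumes "finite E" and "\<forall>A \<subseteq> E. f A \<ge> 0"
  shows "0 \<le> lovasz_ext E f y"
  unfolding lovasz_ext_def using assms next_lower_less[OF assms(1)]
  by (intro sum_nonneg mult_nonneg_nonneg) (auto simp: less_imp_le)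

lemma lovasz_ext_ge_level_set:
  assumes finE: "finite E" and ynn: "\<forall>e\<in>E. 0 \<le> y e"
    and nonneg: "\<forall>A \<subseteq> E. f A \<ge> 0" and mono: "monotone_fn E f"
    and f0: "f {} = 0" and \<delta>: "0 < \<delta>"
  shows "\<delta> * f {e\<in>E. y e \<ge> \<delta>} \<le> lovasz_ext E f y"
proof (cases "{w\<in>y`E. w \<ge> \<delta>} = {}")
  case True
  then have "{e\<in>E. y e \<ge> \<delta>} = {}" by auto
  then have "\<delta> * f {e\<in>E. y e \<ge> \<delta>} = 0" by (simp only: f0 mult_zero_right)
  then show ?thesis using lovasz_ext_nonneg[OF finE nonneg, where y = y] by linarith
next
  case False
  define m where "m = Min {w\<in>y`E. w \<ge> \<delta>}"
  have m: "m \<in> y ` E" "\<delta> \<le> m" "\<And>w. w \<in> y`E \<Longrightarrow> w \<ge> \<delta> \<Longrightarrow> m \<le> w"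
    using Min_in[of "{w\<in>y`E. w \<ge> \<delta>}"] False finE unfolding m_def by auto
  define W where "W = {w\<in>y ` E. 0 < w \<and> w \<le> m}"
  let ?t = "\<lambda>v. (v - next_lower E y v) * f {e \<in> E. y e \<ge> v}"
  have level_eq: "{e\<in>E. y e \<ge> \<delta>} = {e\<in>E. y e \<ge> m}"
    using m by force
  have level_mono: "f {e\<in>E. y e \<ge> m} \<le> f {e \<in> E. y e \<ge> v}" if "v \<in> W" for v
  proof -
    have "{e\<in>E. y e \<ge> m} \<subseteq> {e \<in> E. y e \<ge> v}" using that unfolding W_def by auto
    then show ?thesis using mono unfolding monotone_fn_def by blast
  qed
  have "\<delta> * f {e\<in>E. y e \<ge> \<delta>} \<le> m * f {e\<in>E. y e \<ge> m}"
    using level_eq m nonneg by (simp add: mult_right_mono)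
  also have "\<dots> = (\<Sum>v\<in>W. (v - next_lower E y v) * f {e\<in>E. y e \<ge> m})"
    using sum_gaps_to_next_lower[OF finE ynn m(1)] m(2) \<delta>
    by (simp add: W_def sum_distrib_right[symmetric])
  also have "\<dots> \<le> (\<Sum>v\<in>W. ?t v)"
    using level_mono next_lower_less[OF finE] unfolding W_def
    by (intro sum_mono mult_left_mono) (auto simp: less_imp_le)
  also have "\<dots> \<le> (\<Sum>v\<in>{w \<in> y ` E. w > 0}. ?t v)"
    using finE nonneg next_lower_less[OF finE] unfolding W_def
    by (intro sum_mono2 mult_nonneg_nonneg) (auto simp: less_imp_le)
  finally show ?thesis unfolding lovasz_ext_def .
qed

lemma lovasz_ext_indicator:
  assumes "C \<subseteq> E" and "f {} = 0"
  shows "lovasz_ext E f (indicator C) = f C"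
proof (cases "C = {}")
  case True
  then show ?thesis using assms(2) unfolding lovasz_ext_def by simp
next
  case False
  then have pos_values: "{w \<in> indicator C ` E. w > 0} = {1::real}"
    using assms(1) by (auto simp: image_iff indicator_def)
  have below_1: "insert 0 {w \<in> indicator C ` E. w < 1} = {0::real}"
    by (auto simp: indicator_def)
  have "next_lower E (indicator C) 1 = 0"
    unfolding next_lower_def below_1 by simp
  moreover have "{e \<in> E. indicator C e \<ge> (1::real)} = C"
    using assms(1) by (auto simp: indicator_def)
  ultimately show ?thesis unfolding lovasz_ext_def pos_values by simp
qed

lemma relax_feasible_cut_indicator:
  assumes "st_cut E s t C"
  shows "relax_feasible V E s t (indicator ((E - C)\<^sup>* `` {s})) (indicator C)"
  using assms rtrancl_into_rtrancl[of s _ "E - C"]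
  unfolding relax_feasible_def st_cut_def by (auto simp: indicator_def)

lemma lovasz_ext_optimal_le_cut:
  assumes "st_cut E s t C" and "f {} = 0"
    and "\<forall>x y. relax_feasible V E s t x y \<longrightarrow> lovasz_ext E f y\<^sub>0 \<le> lovasz_ext E f y"
  shows "lovasz_ext E f y\<^sub>0 \<le> f C"
proof -
  have "C \<subseteq> E" using assms(1) unfolding st_cut_def by blast
  then show ?thesis
    using assms relax_feasible_cut_indicator[OF assms(1)] lovasz_ext_indicator by metis
qed

lemma threshold_cut_subset: "threshold_cut V E x \<theta> \<subseteq> E"
  unfolding threshold_cut_def by auto

lemma threshold_cut_empty_if_all_above:
  "E \<subseteq> V \<times> V \<Longrightarrow> \<forall>u\<in>V. \<theta> \<le> x u \<Longrightarrow> threshold_cut V E x \<theta> = {}"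
  unfolding threshold_cut_def level_set_def by auto

lemma threshold_cut_empty_if_all_below:
  "\<forall>u\<in>V. x u < \<theta> \<Longrightarrow> threshold_cut V E x \<theta> = {}"
  unfolding threshold_cut_def level_set_def by force

lemma threshold_cut_at_value:
  assumes finV: "finite V" and \<theta>: "0 < \<theta>" "\<exists>u\<in>V. \<theta> \<le> x u"
  obtains w where "w \<in> x ` V" "next_lower V x w < \<theta>" "\<theta> \<le> w"
    "threshold_cut V E x \<theta> = threshold_cut V E x w"
proof
  define w where "w = Min {z\<in>x ` V. \<theta> \<le> z}"
  have "{z\<in>x ` V. \<theta> \<le> z} \<noteq> {}" using \<theta> by auto
  then show w: "w \<in> x ` V" "\<theta> \<le> w"
    using Min_in[of "{z\<in>x ` V. \<theta> \<le> z}"] finV unfolding w_def by auto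
  have w_least: "\<And>z. z \<in> x ` V \<Longrightarrow> \<theta> \<le> z \<Longrightarrow> w \<le> z"
    using finV unfolding w_def by auto
  show "next_lower V x w < \<theta>"
    unfolding next_lower_def using finV \<theta>(1) w_least by (subst Max_less_iff) force+
  have "level_set V x \<theta> = level_set V x w"
    unfolding level_set_def using w w_least by force
  then show "threshold_cut V E x \<theta> = threshold_cut V E x w"
    unfolding threshold_cut_def by simp
qed

lemma threshold_cut_subset_level_set:
  assumes "finite V" "E \<subseteq> V \<times> V" "\<forall>(u, v)\<in>E. x u - x v \<le> y (u, v)"
  shows "threshold_cut V E x w \<subseteq> {e\<in>E. w - next_lower V x w \<le> y e}"
proof
  fix e assume "e \<in> threshold_cut V E x w"
  then obtain u v where e: "e = (u, v)" "(u, v) \<in> E" "w \<le> x u" "v \<in> V" "x v < w"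
    using assms(2) unfolding threshold_cut_def level_set_def by auto
  then have "x v \<le> next_lower V x w" using le_next_lower[OF assms(1)] by blast
  then show "e \<in> {e\<in>E. w - next_lower V x w \<le> y e}" using e assms(3) by auto
qed

lemma threshold_cut_weighted_le_lovasz_ext:
  assumes finV: "finite V" and EV: "E \<subseteq> V \<times> V"
    and edge: "\<forall>(u, v)\<in>E. x u - x v \<le> y (u, v)" and ynn: "\<forall>e\<in>E. 0 \<le> y e"
    and nonneg: "\<forall>A \<subseteq> E. f A \<ge> 0" and mono: "monotone_fn E f" and f0: "f {} = 0"
    and w: "0 < w"
  shows "(w - next_lower V x w) * f (threshold_cut V E x w) \<le> lovasz_ext E f y"
proof -
  let ?\<delta> = "w - next_lower V x w"
  have finE: "finite E" using finV EV finite_subset by blast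
  have \<delta>: "0 < ?\<delta>" using next_lower_less[OF finV w] by simp
  have "f (threshold_cut V E x w) \<le> f {e\<in>E. ?\<delta> \<le> y e}"
    using threshold_cut_subset_level_set[OF finV EV edge] mono unfolding monotone_fn_def by blast
  then have "?\<delta> * f (threshold_cut V E x w) \<le> ?\<delta> * f {e\<in>E. ?\<delta> \<le> y e}"
    using \<delta> by simp
  also have "\<dots> \<le> lovasz_ext E f y"
    by (rule lovasz_ext_ge_level_set[OF finE ynn nonneg mono f0 \<delta>])
  finally show ?thesis .
qed

lemma threshold_cut_le_step_function:
  fixes f :: "('v \<times> 'v) set \<Rightarrow> real"
  assumes finV: "finite V" and EV: "E \<subseteq> V \<times> V" and xnn: "\<forall>u\<in>V. 0 \<le> x u"
    and nonneg: "\<forall>A \<subseteq> E. f A \<ge> 0" and f0: "f {} = 0"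
  shows "f (threshold_cut V E x \<theta>)
    \<le> (\<Sum>w\<in>{w\<in>x ` V. 0 < w}. f (threshold_cut V E x w) * indicator {next_lower V x w<..w} \<theta>)"
    (is "_ \<le> ?h")
proof -
  have cut_nonneg: "0 \<le> f (threshold_cut V E x w)" for w
    using nonneg threshold_cut_subset by blast
  have h_nonneg: "0 \<le> ?h"
    using cut_nonneg by (simp add: sum_nonneg)
  consider "\<theta> \<le> 0" | "\<forall>u\<in>V. x u < \<theta>" | "0 < \<theta>" "\<exists>u\<in>V. \<theta> \<le> x u"
    using not_le by blast
  then show ?thesis
  proof cases
    case 1
    then have "\<forall>u\<in>V. \<theta> \<le> x u" using xnn by (meson order_trans)
    then show ?thesis using threshold_cut_empty_if_all_above[OF EV] f0 h_nonneg by simp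
  next
    case 2
    then have "threshold_cut V E x \<theta> = {}" by (rule threshold_cut_empty_if_all_below)
    then show ?thesis using f0 h_nonneg by simp
  next
    case 3
    then obtain w where w: "w \<in> x ` V" "next_lower V x w < \<theta>" "\<theta> \<le> w"
      "threshold_cut V E x \<theta> = threshold_cut V E x w"
      using threshold_cut_at_value[OF finV] by metis
    have "f (threshold_cut V E x w) * indicator {next_lower V x w<..w} \<theta> \<le> ?h"
      using w 3 finV cut_nonneg by (intro member_le_sum) auto
    then show ?thesis using w by simp
  qed
qed

lemma integral_uniform_unit_step_function:
  fixes a b c :: "'i \<Rightarrow> real"
  assumes "finite P" and "\<forall>i\<in>P. 0 \<le> a i \<and> a i \<le> b i \<and> b i \<le> 1"
  defines "M \<equiv> uniform_measure lborel {0..1::real}"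
  shows "integrable M (\<lambda>\<theta>. \<Sum>i\<in>P. c i * indicator {a i<..b i} \<theta>)"
    and "integral\<^sup>L M (\<lambda>\<theta>. \<Sum>i\<in>P. c i * indicator {a i<..b i} \<theta>) = (\<Sum>i\<in>P. c i * (b i - a i))"
proof -
  interpret prob_space M unfolding M_def by (rule prob_space_uniform_measure) auto
  have space_M: "space M = UNIV" unfolding M_def by simp
  have integrable_indicator: "integrable M (indicator {a<..b} :: real \<Rightarrow> real)" for a b
  proof (rule integrable_real_indicator)
    show "{a<..b} \<in> sets M" unfolding M_def by simp
    show "emeasure M {a<..b} < \<infinity>" using emeasure_finite by (simp add: less_top[symmetric])
  qed
  then show "integrable M (\<lambda>\<theta>. \<Sum>i\<in>P. c i * indicator {a i<..b i} \<theta>)"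
    by auto
  have measure_interval: "measure M {a i<..b i} = b i - a i" if "i \<in> P" for i
  proof -
    have "{0..1} \<inter> {a i<..b i} = {a i<..b i}" using that assms(2) by auto
    then show ?thesis unfolding M_def using that assms(2) by simp
  qed
  have "integral\<^sup>L M (\<lambda>\<theta>. \<Sum>i\<in>P. c i * indicator {a i<..b i} \<theta>)
      = (\<Sum>i\<in>P. integral\<^sup>L M (\<lambda>\<theta>. c i * indicator {a i<..b i} \<theta>))"
    using integrable_indicator by (intro Bochner_Integration.integral_sum) auto
  also have "\<dots> = (\<Sum>i\<in>P. c i * (b i - a i))"
    using measure_interval integrable_indicator by (intro sum.cong) (simp_all add: space_M)
  finally show "integral\<^sup>L M (\<lambda>\<theta>. \<Sum>i\<in>P. c i * indicator {a i<..b i} \<theta>) = (\<Sum>i\<in>P. c i * (b i - a i))" .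
qed

lemma card_positive_values_le:
  fixes x :: "'v \<Rightarrow> real"
  assumes finV: "finite V" and x0: "0 \<in> x ` V"
  shows "real (card {w\<in>x ` V. 0 < w}) \<le> real (card V) - 1"
proof -
  have "card {w\<in>x ` V. 0 < w} \<le> card (x ` V - {0})" using finV by (intro card_mono) auto
  also have "\<dots> = card (x ` V) - 1" using x0 by simp
  also have "\<dots> \<le> card V - 1" using card_image_le[OF finV, of x] by (rule diff_le_mono)
  finally have "real (card {w\<in>x ` V. 0 < w}) \<le> real (card V - 1)" by simp
  moreover have "0 < card V" using x0 finV by (auto simp: card_gt_0_iff)
  ultimately show ?thesis by (simp add: of_nat_diff)
qed

lemma expected_threshold_cut_le:
  assumes finV: "finite V" and EV: "E \<subseteq> V \<times> V"
    and x01: "\<forall>u\<in>V. 0 \<le> x u \<and> x u \<le> 1" and x0: "0 \<in> x ` V"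
    and edge: "\<forall>(u, v)\<in>E. x u - x v \<le> y (u, v)" and ynn: "\<forall>e\<in>E. 0 \<le> y e"
    and nonneg: "\<forall>A \<subseteq> E. f A \<ge> 0" and mono: "monotone_fn E f" and f0: "f {} = 0"
  shows "integral\<^sup>L (uniform_measure lborel {0..1::real}) (\<lambda>\<theta>. f (threshold_cut V E x \<theta>))
    \<le> (real (card V) - 1) * lovasz_ext E f y"
proof -
  define M where "M = uniform_measure lborel {0..1::real}"
  define P where "P = {w\<in>x ` V. 0 < w}"
  let ?L = "lovasz_ext E f y"
  let ?g = "\<lambda>\<theta>. f (threshold_cut V E x \<theta>)"
  let ?h = "\<lambda>\<theta>. \<Sum>w\<in>P. f (threshold_cut V E x w) * indicator {next_lower V x w<..w} \<theta>"
  have finE: "finite E" using finV EV finite_subset by blast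
  have finP: "finite P" unfolding P_def using finV by simp
  have "0 \<le> next_lower V x w \<and> next_lower V x w \<le> w \<and> w \<le> 1" if "w \<in> P" for w
    using that next_lower_nonneg[OF finV] next_lower_less[OF finV, of w x] x01
    unfolding P_def by auto
  then have intervals: "\<forall>w\<in>P. 0 \<le> next_lower V x w \<and> next_lower V x w \<le> w \<and> w \<le> 1" ..
  note step = integral_uniform_unit_step_function[OF finP intervals, folded M_def]
  have cardP: "real (card P) \<le> real (card V) - 1"
    unfolding P_def by (rule card_positive_values_le[OF finV x0])
  have g_le_h: "?g \<theta> \<le> ?h \<theta>" for \<theta>
    using threshold_cut_le_step_function[OF finV EV _ nonneg f0] x01 unfolding P_def by blast
  have cut_nonneg: "0 \<le> f (threshold_cut V E x w)" for w
    using nonneg threshold_cut_subset by blast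
  have h_nonneg: "0 \<le> ?h \<theta>" for \<theta>
    using cut_nonneg by (intro sum_nonneg mult_nonneg_nonneg) auto
  have "integral\<^sup>L M ?g \<le> integral\<^sup>L M ?h"
  proof (cases "integrable M ?g")
    case True
    then show ?thesis by (rule integral_mono[OF _ step(1) g_le_h])
  next
    case False
    have "0 \<le> integral\<^sup>L M ?h" by (rule Bochner_Integration.integral_nonneg[OF h_nonneg])
    then show ?thesis using not_integrable_integral_eq[OF False] by simp
  qed
  also have "\<dots> = (\<Sum>w\<in>P. f (threshold_cut V E x w) * (w - next_lower V x w))"
    by (rule step(2))
  also have "\<dots> \<le> (\<Sum>w\<in>P. ?L)"
    using threshold_cut_weighted_le_lovasz_ext[OF finV EV edge ynn nonneg mono f0]
    unfolding P_def by (intro sum_mono) (simp add: mult.commute)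
  also have "\<dots> \<le> (real (card V) - 1) * ?L"
    using cardP lovasz_ext_nonneg[OF finE nonneg] by (simp add: mult_right_mono)
  finally show ?thesis unfolding M_def .
qed

theorem lemma10:
  fixes V :: "'v set" and E :: "('v \<times> 'v) set" and s t :: 'v
    and f :: "('v \<times> 'v) set \<Rightarrow> real"
    and Cstar :: "('v \<times> 'v) set"
    and xstar :: "'v \<Rightarrow> real" and ystar :: "('v \<times> 'v) \<Rightarrow> real"
  assumes finV: "finite V"
    and EV: "E \<subseteq> V \<times> V"
    and s: "s \<in> V" and t: "t \<in> V" and st: "s \<noteq> t"
    and nonneg: "\<forall>A \<subseteq> E. f A \<ge> 0"
    and norm: "normalized_fn f"
    and mono: "monotone_fn E f"
    and submod: "submodular_fn E f"
    and Cstar_cut: "st_cut E s t Cstar"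
    and Cstar_min: "\<forall>C. st_cut E s t C \<longrightarrow> f Cstar \<le> f C"
    and feas: "relax_feasible V E s t xstar ystar"
    and opt: "\<forall>x y. relax_feasible V E s t x y \<longrightarrow>
                 lovasz_ext E f ystar \<le> lovasz_ext E f y"
    and x01: "\<forall>u \<in> V. 0 \<le> xstar u \<and> xstar u \<le> 1"
    and y01: "\<forall>e \<in> E. 0 \<le> ystar e \<and> ystar e \<le> 1"
  shows "integral\<^sup>L (uniform_measure lborel {0..1::real})
           (\<lambda>\<theta>. f (threshold_cut V E xstar \<theta>))
           \<le> (real (card V) - 1) * lovasz_ext E f ystar
       \<and> (real (card V) - 1) * lovasz_ext E f ystar \<le> (real (card V) - 1) * f Cstar"
proof
  have f0: "f {} = 0" using norm unfolding normalized_fn_def .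
  have "xstar s - xstar t \<ge> 1" using feas unfolding relax_feasible_def by blast
  then have "xstar t = 0" using x01[rule_format, OF s] x01[rule_format, OF t] by linarith
  then have x0: "0 \<in> xstar ` V" using t by (metis image_eqI)
  have edge: "\<forall>(u, v)\<in>E. xstar u - xstar v \<le> ystar (u, v)"
    using feas unfolding relax_feasible_def by force
  have ynn: "\<forall>e\<in>E. 0 \<le> ystar e" using y01 by blast
  show "integral\<^sup>L (uniform_measure lborel {0..1::real}) (\<lambda>\<theta>. f (threshold_cut V E xstar \<theta>))
      \<le> (real (card V) - 1) * lovasz_ext E f ystar"
    by (rule expected_threshold_cut_le[OF finV EV x01 x0 edge ynn nonneg mono f0])
  have "1 \<le> real (card V)" using finV t by (auto simp: Suc_le_eq card_gt_0_iff)
  then show "(real (card V) - 1) * lovasz_ext E f ystar \<le> (real (card V) - 1) * f Cstar"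
    using lovasz_ext_optimal_le_cut[OF Cstar_cut f0 opt] by (simp add: mult_left_mono)
qed

end
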